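(* Let $k\in\mathbb{R}$, $\upsilon$ a multiplier system of weight $k$ with cusp parameter $m$, $\rho:\Gamma\to GL_d(\mathbb{C})$ a representation, and suppose $F=(f_1,\dots,f_d)^t\in\mathcal{H}(k,\rho,\upsilon)$ has linearly independent components. Then the following are equivalent: (i) for each $1\le j\le d$ there is a convergent $q$-expansion $f_j(q)=q^{\lambda_j}\sum_{n\ge0}a_j(n)q^n$ with $\lambda_j\ge0$; (ii) $\rho(T)=\mathrm{diag}(\mathbf{e}(r_1),\dots,\mathbf{e}(r_d))$ for some real numbers $r_j$.
   Context: $\Gamma=SL(2,\mathbb{Z})$ acts on the upper half-plane $\mathbb{H}$ by Möbius transformations; $T=\begin{pmatrix}1&1\\0&1\end{pmatrix}$; $q=e^{2\pi iz}$, $q^\lambda=e^{2\pi i\lambda z}$, $\mathbf{e}(r)=e^{2\pi ir}$. Complex powers use the principal branch of $\log$. A multiplier system of weight $k$ is a map $\upsilon:\Gamma\to\{|w|=1\}$ such that $\nu(\gamma,z)=\upsilon(\gamma)(cz+d)^k$ satisfies $\nu(\gamma\sigma,z)=\nu(\gamma,\sigma z)\nu(\sigma,z)$; its cusp parameter is the $m\in[0,12)$ with $\upsilon(T)=\mathbf{e}(m/12)$. Slash: $(f|_k^\upsilon\gamma)(z)=\upsilon(\gamma)^{-1}(cz+d)^{-k}f(\gamma z)$. Moderate growth: $|f(x+iy)|\le y^N$ for $y>c$. $\mathcal{H}(k,\rho,\upsilon)$: column vectors $F$ of holomorphic moderate-growth functions on $\mathbb{H}$ with $F|_k^\upsilon\gamma=\rho(\gamma)F$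 for all $\gamma$. "Convergent $q$-expansion" means $f_j(z)=e^{2\pi i\lambda_jz}\sum_{n\ge0}a_j(n)e^{2\pi inz}$ for all $z\in\mathbb{H}$. *)

theory Defs
  imports "HOL-Complex_Analysis.Complex_Analysis"
begin

(* Elements of SL(2,Z) are represented as (a,b,c,d) standing for the matrix [[a,b],[c,d]]. *)
type_synonym sl2 = "int \<times> int \<times> int \<times> int"

definition SL2Z :: "sl2 set" where
  "SL2Z = {(a,b,c,d). a*d - b*c = 1}"

fun sl2_mult :: "sl2 \<Rightarrow> sl2 \<Rightarrow> sl2" where
  "sl2_mult (a,b,c,d) (a',b',c',d') = (a*a' + b*c', a*b' + b*d', c*a' + d*c', c*b' + d*d')"

definition T_mat :: sl2 where "T_mat = (1,1,0,1)"

definition upper_half_plane :: "complex set" where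
  "upper_half_plane = {z. Im z > 0}"

fun moebius :: "sl2 \<Rightarrow> complex \<Rightarrow> complex" where
  "moebius (a,b,c,d) z = (of_int a * z + of_int b) / (of_int c * z + of_int d)"

(* automorphy factor (cz+d)^k, principal branch *)
fun aut_fac :: "real \<Rightarrow> sl2 \<Rightarrow> complex \<Rightarrow> complex" where
  "aut_fac k (a,b,c,d) z = (of_int c * z + of_int d) powr (of_real k)"

definition e :: "real \<Rightarrow> complex" where
  "e r = exp (2 * pi * \<i> * of_real r)"

definition multiplier_system :: "real \<Rightarrow> (sl2 \<Rightarrow> complex) \<Rightarrow> bool" where
  "multiplier_system k v \<longleftrightarrow>
     (\<forall>\<gamma>\<in>SL2Z. norm (v \<gamma>) = 1) \<and>
     (\<forall>\<gamma>\<in>SL2Z. \<forall>\<sigma>\<in>SL2Z. \<forall>z\<in>upper_half_plane.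
        v (sl2_mult \<gamma> \<sigma>) * aut_fac k (sl2_mult \<gamma> \<sigma>) z
        = (v \<gamma> * aut_fac k \<gamma> (moebius \<sigma> z)) * (v \<sigma> * aut_fac k \<sigma> z))"

definition cusp_parameter :: "(sl2 \<Rightarrow> complex) \<Rightarrow> real \<Rightarrow> bool" where
  "cusp_parameter v m \<longleftrightarrow> 0 \<le> m \<and> m < 12 \<and> v T_mat = e (m / 12)"

definition representation :: "(sl2 \<Rightarrow> complex^'d^'d) \<Rightarrow> bool" where
  "representation \<rho> \<longleftrightarrow>
     (\<forall>\<gamma>\<in>SL2Z. invertible (\<rho> \<gamma>)) \<and>
     (\<forall>\<gamma>\<in>SL2Z. \<forall>\<sigma>\<in>SL2Z. \<rho> (sl2_mult \<gamma> \<sigma>) = \<rho> \<gamma> ** \<rho> \<sigma>)"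

definition moderate_growth :: "(complex \<Rightarrow> complex) \<Rightarrow> bool" where
  "moderate_growth f \<longleftrightarrow>
     (\<exists>N c. \<forall>x y. y > c \<and> y > 0 \<longrightarrow> norm (f (Complex x y)) \<le> y powr N)"

definition slash :: "real \<Rightarrow> (sl2 \<Rightarrow> complex) \<Rightarrow> (complex \<Rightarrow> complex^'d) \<Rightarrow> sl2 \<Rightarrow> complex \<Rightarrow> complex^'d" where
  "slash k v F \<gamma> z = (\<chi> j. inverse (v \<gamma>) * inverse (aut_fac k \<gamma> z) * F (moebius \<gamma> z) $ j)"

definition vvmf_space :: "real \<Rightarrow> (sl2 \<Rightarrow> complex^'d^'d) \<Rightarrow> (sl2 \<Rightarrow> complex) \<Rightarrow> (complex \<Rightarrow> complex^'d) set" where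
  "vvmf_space k \<rho> v = {F.
     (\<forall>j. (\<lambda>z. F z $ j) holomorphic_on upper_half_plane) \<and>
     (\<forall>j. moderate_growth (\<lambda>z. F z $ j)) \<and>
     (\<forall>\<gamma>\<in>SL2Z. \<forall>z\<in>upper_half_plane. slash k v F \<gamma> z = \<rho> \<gamma> *v F z)}"

definition components_lin_indep :: "(complex \<Rightarrow> complex^'d) \<Rightarrow> bool" where
  "components_lin_indep F \<longleftrightarrow>
     (\<forall>c :: 'd \<Rightarrow> complex. (\<forall>z\<in>upper_half_plane. (\<Sum>j\<in>UNIV. c j * F z $ j) = 0) \<longrightarrow> (\<forall>j. c j = 0))"

definition has_convergent_q_expansion :: "(complex \<Rightarrow> complex) \<Rightarrow> real \<Rightarrow> (nat \<Rightarrow> complex) \<Rightarrow> bool" where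
  "has_convergent_q_expansion f lam a \<longleftrightarrow>
     (\<forall>z\<in>upper_half_plane. \<exists>s. (\<lambda>n. a n * exp (2 * pi * \<i> * of_nat n * z)) sums s \<and>
        f z = exp (2 * pi * \<i> * of_real lam * z) * s)"

end

theory Submission
  imports Defs "HOL-Real_Asymp.Real_Asymp"
begin

(* If every component has a q-expansion, then f_j(z+1) = e(lambda_j) f_j(z), so rho(T) and
   diag(e(lambda_j - m/12)) act identically on all values F(z); by linear independence of the
   components they coincide.  Conversely, if rho(T) is diagonal, then f_j(z+1) = e(mu) f_j(z);
   with lambda = frac mu the function exp(-2 pi i lambda z) f_j(z) is 1-periodic, hence a
   function G of q = exp(2 pi i z) on the punctured unit disc.  Moderate growth of f_j makes
   q G(q) tend to 0, so G has a removable singularity at 0 and its Taylor series is the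
   q-expansion. *)

lemma e_add: "e a * e b = e (a + b)"
  unfolding e_def by (simp add: exp_add[symmetric] algebra_simps)

lemma e_nonzero: "e r \<noteq> 0"
  by (simp add: e_def)

lemma e_of_int: "e (of_int n) = 1"
  unfolding e_def using exp_eq[of "2 * pi * \<i> * of_int n" 0] by (auto simp: algebra_simps)

lemma e_add_of_int: "e (r + of_int n) = e r"
  using e_add[of r "of_int n"] by (simp add: e_of_int)

lemma upper_half_plane_add_real:
  "z \<in> upper_half_plane \<Longrightarrow> z + of_real x \<in> upper_half_plane"
  by (simp add: upper_half_plane_def)

lemma periodic_shift_of_int:
  assumes per: "\<forall>z\<in>upper_half_plane. g (z + 1) = g z" and z: "z \<in> upper_half_plane"
  shows "g (z + of_int n) = g z"
proof -
  have shift_nat: "g (w + of_nat k) = g w" if "w \<in> upper_half_plane" for w k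
  proof (induction k)
    case (Suc k)
    have "w + of_nat k \<in> upper_half_plane"
      using upper_half_plane_add_real[OF that, of "of_nat k"] by simp
    have "g (w + of_nat (Suc k)) = g (w + of_nat k + 1)"
      by (simp add: algebra_simps)
    also have "\<dots> = g (w + of_nat k)"
      using per \<open>w + of_nat k \<in> upper_half_plane\<close> by blast
    finally show ?case using Suc.IH by simp
  qed simp
  show ?thesis
  proof (cases "n \<ge> 0")
    case True
    then show ?thesis using shift_nat[OF z, of "nat n"] by simp
  next
    case False
    have "z + of_int n \<in> upper_half_plane"
      using upper_half_plane_add_real[OF z, of "of_int n"] by simp
    from shift_nat[OF this, of "nat (- n)"] False show ?thesis by simp
  qed
qed

definition q_pullback :: "(complex \<Rightarrow> complex) \<Rightarrow> complex \<Rightarrow> complex" where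
  "q_pullback g q = g (Ln q / (2 * pi * \<i>))"

lemma Im_Ln_div_2pi_i:
  "q \<noteq> 0 \<Longrightarrow> Im (Ln q / (2 * pi * \<i>)) = - ln (norm q) / (2 * pi)"
  by (simp add: Im_divide power2_eq_square field_simps)

lemma Ln_div_2pi_i_in_upper_half_plane:
  assumes "q \<noteq> 0" "norm q < 1"
  shows "Ln q / (2 * pi * \<i>) \<in> upper_half_plane"
proof -
  have "ln (norm q) < 0" using assms by simp
  then show ?thesis
    using Im_Ln_div_2pi_i[OF assms(1)] by (simp add: upper_half_plane_def divide_neg_pos)
qed

lemma exp_2pi_i_in_punctured_disc:
  "z \<in> upper_half_plane \<Longrightarrow> exp (2 * pi * \<i> * z) \<in> ball 0 1 - {0}"
  by (simp add: upper_half_plane_def)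

lemma q_pullback_exp:
  assumes per: "\<forall>z\<in>upper_half_plane. g (z + 1) = g z" and w: "w \<in> upper_half_plane"
  shows "q_pullback g (exp (2 * pi * \<i> * w)) = g w"
proof -
  define q where "q = exp (2 * pi * \<i> * w)"
  have q: "q \<noteq> 0" "norm q < 1"
    using exp_2pi_i_in_punctured_disc[OF w] by (auto simp: q_def)
  have "exp (2 * pi * \<i> * w) = exp (2 * pi * \<i> * (Ln q / (2 * pi * \<i>)))"
    using q by (simp add: q_def)
  then obtain n :: int
    where "2 * pi * \<i> * w = 2 * pi * \<i> * (Ln q / (2 * pi * \<i>)) + of_int (2 * n) * pi * \<i>"
    by (auto simp: exp_eq)
  then have "w = Ln q / (2 * pi * \<i>) + of_int n"
    by (simp add: field_simps)
  then have "q_pullback g q = g w"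
    using periodic_shift_of_int[OF per Ln_div_2pi_i_in_upper_half_plane[OF q]]
    by (simp add: q_pullback_def)
  then show ?thesis by (simp add: q_def)
qed

(* Ln is holomorphic off the nonpositive reals; near them the branch Ln(-q)/(2 pi i) + 1/2
   serves instead, and by periodicity it gives the same value of g. *)
lemma holomorphic_on_q_pullback:
  assumes hol: "g holomorphic_on upper_half_plane"
    and per: "\<forall>z\<in>upper_half_plane. g (z + 1) = g z"
  shows "q_pullback g holomorphic_on ball 0 1 - {0}"
proof -
  define D where "D = ball 0 1 - {0 :: complex}"
  have D_iff: "q \<in> D \<longleftrightarrow> q \<noteq> 0 \<and> norm q < 1" for q
    by (auto simp: D_def)
  have principal: "q_pullback g holomorphic_on D - \<real>\<^sub>\<le>\<^sub>0"
    unfolding q_pullback_def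
  proof (rule holomorphic_on_compose_gen[OF _ hol, unfolded o_def])
    show "(\<lambda>q. Ln q / (2 * pi * \<i>)) holomorphic_on D - \<real>\<^sub>\<le>\<^sub>0"
      by (intro holomorphic_intros) auto
    show "(\<lambda>q. Ln q / (2 * pi * \<i>)) ` (D - \<real>\<^sub>\<le>\<^sub>0) \<subseteq> upper_half_plane"
      using Ln_div_2pi_i_in_upper_half_plane D_iff by auto
  qed
  define L where "L = (\<lambda>q. Ln (- q) / (2 * pi * \<i>) + 1 / 2)"
  have L_in: "L q \<in> upper_half_plane" if "q \<in> D" for q
    using Ln_div_2pi_i_in_upper_half_plane[of "- q"] that upper_half_plane_add_real[of _ "1/2"]
    by (auto simp: L_def D_iff)
  have "(g \<circ> L) holomorphic_on D - \<real>\<^sub>\<ge>\<^sub>0"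
  proof (rule holomorphic_on_compose_gen[OF _ hol])
    have "(\<lambda>q. Ln (- q)) holomorphic_on D - \<real>\<^sub>\<ge>\<^sub>0"
    proof (rule holomorphic_on_Ln')
      fix q assume "q \<in> D - \<real>\<^sub>\<ge>\<^sub>0"
      then show "- q \<notin> \<real>\<^sub>\<le>\<^sub>0"
        by (metis DiffD2 neg_0_le_iff_le nonpos_Reals_cases nonneg_Reals_of_real_iff
            of_real_minus minus_minus)
    qed (intro holomorphic_intros)
    then show "L holomorphic_on D - \<real>\<^sub>\<ge>\<^sub>0"
      unfolding L_def by (intro holomorphic_intros) auto
    show "L ` (D - \<real>\<^sub>\<ge>\<^sub>0) \<subseteq> upper_half_plane"
      using L_in by auto
  qed
  moreover have "q_pullback g q = (g \<circ> L) q" if "q \<in> D - \<real>\<^sub>\<ge>\<^sub>0" for q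
  proof -
    have "2 * pi * \<i> * L q = Ln (- q) + pi * \<i>"
      by (simp add: L_def field_simps)
    then have "exp (2 * pi * \<i> * L q) = q"
      using that by (simp add: exp_add D_iff)
    then have "q_pullback g q = q_pullback g (exp (2 * pi * \<i> * L q))"
      by simp
    also have "\<dots> = g (L q)"
      using q_pullback_exp[OF per L_in] that by simp
    finally show ?thesis by simp
  qed
  ultimately have opposite: "q_pullback g holomorphic_on D - \<real>\<^sub>\<ge>\<^sub>0"
    using holomorphic_transform by metis
  have "D = (D - \<real>\<^sub>\<le>\<^sub>0) \<union> (D - \<real>\<^sub>\<ge>\<^sub>0)"
  proof safe
    fix q assume "q \<in> D" "q \<in> \<real>\<^sub>\<le>\<^sub>0" "q \<in> \<real>\<^sub>\<ge>\<^sub>0"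
    then show False
      using D_iff by (metis antisym nonneg_Reals_cases nonpos_Reals_cases of_real_0 of_real_eq_iff)
  qed
  moreover have "q_pullback g holomorphic_on (D - \<real>\<^sub>\<le>\<^sub>0) \<union> (D - \<real>\<^sub>\<ge>\<^sub>0)"
    by (intro holomorphic_on_Un principal opposite open_Diff closed_nonpos_Reals_complex
        closed_nonneg_Reals_complex) (auto simp: D_def)
  ultimately show ?thesis
    by (simp add: D_def)
qed

lemma filterlim_minus_ln_norm_at_top:
  "filterlim (\<lambda>q::complex. - ln (norm q) / (2 * pi)) at_top (at 0)"
proof -
  have "filterlim (\<lambda>t. - ln t / (2 * pi)) at_top (at_right 0)"
    by real_asymp
  moreover have "filterlim norm (at_right 0) (at (0::complex))"
    unfolding filterlim_at
    by (auto simp: eventually_at_filter intro: tendsto_norm_zero)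
  ultimately show ?thesis
    by (rule filterlim_compose)
qed

(* Writing y = Im (Ln q / (2 pi i)), so that norm q = exp (-2 pi y), the bound gives
   norm (q * q_pullback g q) <= exp (-2 pi (1 - delta) y) * y powr N. *)
lemma tendsto_q_times_q_pullback:
  assumes "\<delta> < 1"
    and bound: "\<And>z. z \<in> upper_half_plane \<Longrightarrow> Im z > C \<Longrightarrow>
                  norm (g z) \<le> exp (2 * pi * \<delta> * Im z) * Im z powr N"
  shows "((\<lambda>q. q * q_pullback g q) \<longlongrightarrow> 0) (at 0)"
proof -
  define y where "y = (\<lambda>q::complex. - ln (norm q) / (2 * pi))"
  define \<phi> where "\<phi> = (\<lambda>t. exp (- 2 * pi * (1 - \<delta>) * t) * t powr N)"
  have y: "filterlim y at_top (at 0)"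
    unfolding y_def by (rule filterlim_minus_ln_norm_at_top)
  have "(\<phi> \<longlongrightarrow> 0) at_top"
    unfolding \<phi>_def using \<open>\<delta> < 1\<close> by real_asymp
  from filterlim_compose[OF this y] have lim: "((\<lambda>q. \<phi> (y q)) \<longlongrightarrow> 0) (at 0)" .
  show ?thesis
  proof (rule Lim_null_comparison[OF _ lim])
    have "eventually (\<lambda>q. q \<in> ball 0 1 - {0}) (at (0::complex))"
      unfolding eventually_at by (intro exI[of _ 1]) (auto simp: dist_norm)
    moreover have "eventually (\<lambda>q. C < y q) (at 0)"
      using y by (simp add: filterlim_at_top_dense)
    ultimately show "eventually (\<lambda>q. norm (q * q_pullback g q) \<le> \<phi> (y q)) (at 0)"
    proof eventually_elim
      case (elim q)
      then have q: "q \<noteq> 0" "norm q < 1" by auto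
      define w where "w = Ln q / (2 * pi * \<i>)"
      have w: "w \<in> upper_half_plane" "Im w = y q"
        using Ln_div_2pi_i_in_upper_half_plane[OF q] Im_Ln_div_2pi_i[OF q(1)]
        by (simp_all add: w_def y_def)
      have "norm q = exp (- 2 * pi * y q)"
        using q by (simp add: y_def)
      then have "norm (q * q_pullback g q) = exp (- 2 * pi * y q) * norm (g w)"
        by (simp add: q_pullback_def w_def norm_mult)
      also have "\<dots> \<le> exp (- 2 * pi * y q) * (exp (2 * pi * \<delta> * y q) * y q powr N)"
        using bound[OF w(1)] w(2) elim(2) by (intro mult_left_mono) auto
      also have "\<dots> = exp (- 2 * pi * y q + 2 * pi * \<delta> * y q) * y q powr N"
        by (simp only: exp_add mult.assoc)
      also have "\<dots> = \<phi> (y q)"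
        by (simp add: \<phi>_def algebra_simps)
      finally show ?case .
    qed
  qed
qed

(* q * q_pullback g q extends holomorphically to the disc with value 0 at 0,
   so dividing it by q leaves a holomorphic function on the whole disc. *)
lemma periodic_holomorphic_q_expansion:
  assumes hol: "g holomorphic_on upper_half_plane"
    and per: "\<forall>z\<in>upper_half_plane. g (z + 1) = g z"
    and lim: "((\<lambda>q. q * q_pullback g q) \<longlongrightarrow> 0) (at 0)"
  shows "\<exists>a. \<forall>z\<in>upper_half_plane. (\<lambda>n. a n * exp (2 * pi * \<i> * of_nat n * z)) sums g z"
proof -
  define h where "h = (\<lambda>q. if q = 0 then 0 else q * q_pullback g q)"
  have "h holomorphic_on ball 0 1"
    unfolding h_def
    using holomorphic_on_q_pullback[OF hol per]
    by (intro removable_singularity[OF _ _ lim] holomorphic_intros) auto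
  define P where "P = (\<lambda>q. if q = 0 then deriv h 0 else (h q - h 0) / (q - 0))"
  have hol_P: "P holomorphic_on ball 0 1"
    unfolding P_def using \<open>h holomorphic_on ball 0 1\<close> by (rule pole_lemma_open) auto
  define a where "a = (\<lambda>n. (deriv ^^ n) P 0 / fact n)"
  show ?thesis
  proof (intro exI[of _ a] ballI)
    fix z assume z: "z \<in> upper_half_plane"
    define q where "q = exp (2 * pi * \<i> * z)"
    have q: "q \<in> ball 0 1 - {0}"
      using exp_2pi_i_in_punctured_disc[OF z] by (simp add: q_def)
    have "(\<lambda>n. a n * (q - 0) ^ n) sums P q"
      unfolding a_def using q by (intro holomorphic_power_series[OF hol_P]) auto
    moreover have "P q = g z"
      using q q_pullback_exp[OF per z] by (simp add: P_def h_def q_def)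
    moreover have "q ^ n = exp (2 * pi * \<i> * of_nat n * z)" for n
      unfolding q_def exp_of_nat_mult[symmetric] by (simp add: algebra_simps)
    ultimately show "(\<lambda>n. a n * exp (2 * pi * \<i> * of_nat n * z)) sums g z"
      by simp
  qed
qed

lemma twisted_periodic_has_convergent_q_expansion:
  assumes hol: "f holomorphic_on upper_half_plane" and growth: "moderate_growth f"
    and twist: "\<forall>z\<in>upper_half_plane. f (z + 1) = e \<mu> * f z"
  shows "\<exists>lam a. lam \<ge> 0 \<and> has_convergent_q_expansion f lam a"
proof -
  define lam where "lam = frac \<mu>"
  define g where "g = (\<lambda>z. exp (- 2 * pi * \<i> * lam * z) * f z)"
  have "e \<mu> = e lam"
    using e_add_of_int[of lam "\<lfloor>\<mu>\<rfloor>"] by (simp add: lam_def frac_def)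
  have "g (z + 1) = g z" if "z \<in> upper_half_plane" for z
  proof -
    have "g (z + 1) = (exp (- 2 * pi * \<i> * lam * (z + 1)) * e lam) * f z"
      using twist that \<open>e \<mu> = e lam\<close> by (simp add: g_def)
    also have "exp (- 2 * pi * \<i> * lam * (z + 1)) * e lam = exp (- 2 * pi * \<i> * lam * z)"
      unfolding e_def by (simp add: exp_add[symmetric] algebra_simps)
    finally show ?thesis
      by (simp add: g_def)
  qed
  then have per: "\<forall>z\<in>upper_half_plane. g (z + 1) = g z"
    by blast
  have hol_g: "g holomorphic_on upper_half_plane"
    unfolding g_def by (intro holomorphic_intros hol)
  from growth obtain N c
    where Nc: "\<And>x y. y > c \<Longrightarrow> y > 0 \<Longrightarrow> norm (f (Complex x y)) \<le> y powr N"
    unfolding moderate_growth_def by blast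
  have "norm (g z) \<le> exp (2 * pi * lam * Im z) * Im z powr N"
    if "z \<in> upper_half_plane" "Im z > c" for z
    using Nc[of "Im z" "Re z"] that
    by (simp add: g_def norm_mult upper_half_plane_def mult_left_mono)
  then obtain a
    where a: "\<forall>z\<in>upper_half_plane. (\<lambda>n. a n * exp (2 * pi * \<i> * of_nat n * z)) sums g z"
    using periodic_holomorphic_q_expansion[OF hol_g per tendsto_q_times_q_pullback]
      frac_lt_1[of \<mu>] unfolding lam_def by blast
  have "f z = exp (2 * pi * \<i> * lam * z) * g z" for z
    by (simp add: g_def mult.assoc[symmetric] exp_add[symmetric])
  with a have "has_convergent_q_expansion f lam a"
    unfolding has_convergent_q_expansion_def by blast
  then show ?thesis
    using frac_ge_0 unfolding lam_def by blast
qed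

lemma exp_2pi_i_of_nat_mult_translate:
  "exp (2 * pi * \<i> * of_nat n * (z + 1)) = exp (2 * pi * \<i> * of_nat n * z)"
proof -
  have "exp (2 * pi * \<i> * of_nat n) = 1"
    using e_of_int[of "int n"] by (simp add: e_def)
  then show ?thesis
    by (simp add: distrib_left exp_add)
qed

lemma has_convergent_q_expansion_translate:
  assumes "has_convergent_q_expansion f lam a" and z: "z \<in> upper_half_plane"
  shows "f (z + 1) = e lam * f z"
proof -
  have expansion: "\<exists>s. (\<lambda>n. a n * exp (2 * pi * \<i> * of_nat n * w)) sums s \<and>
      f w = exp (2 * pi * \<i> * lam * w) * s" if "w \<in> upper_half_plane" for w
    using assms(1) that unfolding has_convergent_q_expansion_def by blast
  obtain s where s: "(\<lambda>n. a n * exp (2 * pi * \<i> * of_nat n * z)) sums s"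
      "f z = exp (2 * pi * \<i> * lam * z) * s"
    using expansion[OF z] by blast
  obtain s' where s': "(\<lambda>n. a n * exp (2 * pi * \<i> * of_nat n * (z + 1))) sums s'"
      "f (z + 1) = exp (2 * pi * \<i> * lam * (z + 1)) * s'"
    using expansion[OF upper_half_plane_add_real[OF z, of 1]] by auto
  from s'(1) s(1) have "s' = s"
    unfolding exp_2pi_i_of_nat_mult_translate by (rule sums_unique2)
  moreover have "exp (2 * pi * \<i> * lam * (z + 1)) = e lam * exp (2 * pi * \<i> * lam * z)"
    unfolding e_def by (simp add: exp_add[symmetric] algebra_simps)
  ultimately show ?thesis
    using s(2) s'(2) by simp
qed

lemma vvmf_space_translate:
  assumes "F \<in> vvmf_space k \<rho> v" and "v T_mat \<noteq> 0" and "z \<in> upper_half_plane"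
  shows "F (z + 1) $ j = v T_mat * (\<rho> T_mat *v F z) $ j"
proof -
  have "T_mat \<in> SL2Z"
    by (simp add: T_mat_def SL2Z_def)
  with assms(1,3) have "slash k v F T_mat z $ j = (\<rho> T_mat *v F z) $ j"
    by (simp add: vvmf_space_def)
  moreover have "moebius T_mat z = z + 1" "aut_fac k T_mat z = 1"
    by (simp_all add: T_mat_def)
  ultimately have "inverse (v T_mat) * F (z + 1) $ j = (\<rho> T_mat *v F z) $ j"
    by (simp add: slash_def)
  with assms(2) show ?thesis
    by (simp add: field_simps)
qed

lemma components_lin_indep_matrix_eq:
  fixes A B :: "complex^'d^'d"
  assumes "components_lin_indep F"
    and "\<forall>z\<in>upper_half_plane. A *v F z = B *v F z"
  shows "A = B"
proof -
  have "(A - B) $ i $ j = 0" for i j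
  proof -
    have "(\<Sum>j\<in>UNIV. (A - B) $ i $ j * F z $ j) = (A *v F z) $ i - (B *v F z) $ i" for z
      by (simp add: matrix_vector_mult_def sum_subtractf left_diff_distrib)
    with assms(2) have "\<forall>z\<in>upper_half_plane. (\<Sum>j\<in>UNIV. (A - B) $ i $ j * F z $ j) = 0"
      by simp
    with assms(1) show ?thesis
      unfolding components_lin_indep_def by blast
  qed
  then show ?thesis
    by (simp add: vec_eq_iff)
qed

lemma diagonal_matrix_vector_mult:
  "(\<chi> i j. if i = j then d i else 0) *v x = (\<chi> i. d i * x $ i)"
  by (simp add: matrix_vector_mult_def vec_eq_iff if_distrib if_distribR cong: if_cong)

lemma vvmf_space_rho_T_diagonal:
  fixes F :: "complex \<Rightarrow> complex^'d"
  assumes F: "F \<in> vvmf_space k \<rho> v" and v: "v T_mat = e \<mu>"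
    and indep: "components_lin_indep F"
    and lam: "\<And>j. has_convergent_q_expansion (\<lambda>z. F z $ j) (lam j) (a j)"
  shows "\<rho> T_mat = (\<chi> i j. if i = j then e (lam i - \<mu>) else 0)"
proof (rule components_lin_indep_matrix_eq[OF indep], intro ballI)
  fix z assume z: "z \<in> upper_half_plane"
  have "e \<mu> * (\<rho> T_mat *v F z) $ i = e \<mu> * (e (lam i - \<mu>) * F z $ i)" for i
  proof -
    have "e \<mu> * e (lam i - \<mu>) = e (lam i)"
      by (simp add: e_add)
    then show ?thesis
      using vvmf_space_translate[OF F _ z, of i] has_convergent_q_expansion_translate[OF lam z]
      by (simp add: v e_nonzero mult.assoc[symmetric])
  qed
  then show "\<rho> T_mat *v F z = (\<chi> i j. if i = j then e (lam i - \<mu>) else 0) *v F z"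
    using e_nonzero by (simp add: vec_eq_iff diagonal_matrix_vector_mult)
qed

lemma vvmf_space_component_has_convergent_q_expansion:
  fixes F :: "complex \<Rightarrow> complex^'d"
  assumes F: "F \<in> vvmf_space k \<rho> v" and v: "v T_mat = e \<mu>"
    and \<rho>: "\<rho> T_mat = (\<chi> i j. if i = j then e (r i) else 0)"
  shows "\<exists>lam a. lam \<ge> 0 \<and> has_convergent_q_expansion (\<lambda>z. F z $ j) lam a"
proof (rule twisted_periodic_has_convergent_q_expansion)
  show "(\<lambda>z. F z $ j) holomorphic_on upper_half_plane" "moderate_growth (\<lambda>z. F z $ j)"
    using F by (simp_all add: vvmf_space_def)
  show "\<forall>z\<in>upper_half_plane. F (z + 1) $ j = e (\<mu> + r j) * F z $ j"
    using vvmf_space_translate[OF F] v \<rho>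
    by (simp add: e_nonzero diagonal_matrix_vector_mult e_add[symmetric])
qed

theorem lemma2p18:
  fixes k :: real and v :: "sl2 \<Rightarrow> complex" and m :: real
    and \<rho> :: "sl2 \<Rightarrow> complex^'d^'d" and F :: "complex \<Rightarrow> complex^'d"
  assumes "multiplier_system k v"
    and "cusp_parameter v m"
    and "representation \<rho>"
    and "F \<in> vvmf_space k \<rho> v"
    and "components_lin_indep F"
  shows "(\<forall>j. \<exists>lam a. lam \<ge> 0 \<and> has_convergent_q_expansion (\<lambda>z. F z $ j) lam a)
     \<longleftrightarrow> (\<exists>r :: 'd \<Rightarrow> real. \<rho> T_mat = (\<chi> i j. if i = j then e (r i) else 0))"
proof -
  have v: "v T_mat = e (m / 12)"
    using assms(2) by (simp add: cusp_parameter_def)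
  show ?thesis
  proof
    assume "\<forall>j. \<exists>lam a. lam \<ge> 0 \<and> has_convergent_q_expansion (\<lambda>z. F z $ j) lam a"
    then obtain lam a where "\<And>j. has_convergent_q_expansion (\<lambda>z. F z $ j) (lam j) (a j)"
      by metis
    then have "\<rho> T_mat = (\<chi> i j. if i = j then e (lam i - m / 12) else 0)"
      by (rule vvmf_space_rho_T_diagonal[OF assms(4) v assms(5)])
    then show "\<exists>r :: 'd \<Rightarrow> real. \<rho> T_mat = (\<chi> i j. if i = j then e (r i) else 0)"
      by (intro exI[of _ "\<lambda>i. lam i - m / 12"]) simp
  next
    assume "\<exists>r :: 'd \<Rightarrow> real. \<rho> T_mat = (\<chi> i j. if i = j then e (r i) else 0)"
    then show "\<forall>j. \<exists>lam a. lam \<ge> 0 \<and> has_convergent_q_expansion (\<lambda>z. F z $ j) lam a"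
      using vvmf_space_component_has_convergent_q_expansion[OF assms(4) v] by blast
  qed
qed

end
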